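(* Let $M\subset\mathbb C^{n+d}$ be a generic real submanifold through $0$ given locally by $\Re e\, w_j={}^t\bar zA_jz+O(3)$, $j=1,\dots,d$ (with $A_j$ Hermitian $n\times n$, and $z$, $\Im m\, w$ of weights one and two in the remainder), strongly Levi nondegenerate at $0$. Let $b\in\mathbb R^d$ with $\sum_jb_jA_j$ invertible and let $a\in\mathbb C^d$ be sufficiently small. If $M$ is $\mathfrak D(a)$-nondegenerate at $0$, then there exists $V\in\mathbb C^n$ such that $M$ is stationary minimal at $0$ for $(a,b-a-\overline a,V)$.
   Context: Strongly Levi nondegenerate at $0$: some real combination $\sum_jc_jA_j$ is invertible. Set $P=\sum_ja_jA_j$, $A=\sum_j(b_j-a_j-\overline{a_j})A_j$ (invertible for $a$ small) and let $X$ be the unique $n\times n$ solution with $\|X\|<1$ of $PX^2+AX+{}^t\overline P=0$. $M$ is $\mathfrak D(a)$-nondegenerate at $0$ if there exists $V\in\mathbb C^n$ such that the real $d\times d$ matrix $\Re e\big(\sum_{r=0}^\infty{}^t\overline V\,{}^t\overline X^{\,r}A_jA^{-1}A_sX^rV\big)_{j,s}$ is nondegenerate. $M$ is stationary minimal at $0$ for $(a,b-a-\overline a,V)$ if $A_1,\dots,A_d$ restricted to $\mathrm{span}_{\mathbb R}\{V,XV,X^2V,\dots\}$ are $\mathbb R$-linearly independent, i.e. $\lambda\in\mathbb R^d$ and $\sum_j\lambda_jA_jX^kV=0$ for all $k\ge0$ imply $\lambda=0$. *)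

theory Defs
  imports "HOL-Analysis.Analysis"
begin

definition cscale :: "complex \<Rightarrow> complex^'n^'m \<Rightarrow> complex^'n^'m" where
  "cscale c M = (\<chi> i k. c * M$i$k)"

text \<open>matrix power w.r.t. the matrix product (note: ^ on vec is componentwise)\<close>
primrec matpow :: "complex^'n^'n \<Rightarrow> nat \<Rightarrow> complex^'n^'n" where
  "matpow X 0 = mat 1"
| "matpow X (Suc r) = X ** matpow X r"

definition ctrans :: "complex^'n^'m \<Rightarrow> complex^'m^'n" where
  "ctrans M = (\<chi> i k. cnj (M$k$i))"

definition hprod :: "complex^'n \<Rightarrow> complex^'n \<Rightarrow> complex" where
  "hprod V W = (\<Sum>i\<in>UNIV. cnj (V$i) * W$i)"

definition hermitian :: "complex^'n^'n \<Rightarrow> bool" where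
  "hermitian M \<longleftrightarrow> ctrans M = M"

definition strongly_Levi_nondeg :: "('d::finite \<Rightarrow> complex^'n^'n) \<Rightarrow> bool" where
  "strongly_Levi_nondeg Am \<longleftrightarrow>
     (\<exists>c::real^'d. invertible (\<Sum>j\<in>UNIV. cscale (complex_of_real (c$j)) (Am j)))"

definition Pmat :: "('d::finite \<Rightarrow> complex^'n^'n) \<Rightarrow> complex^'d \<Rightarrow> complex^'n^'n" where
  "Pmat Am a = (\<Sum>j\<in>UNIV. cscale (a$j) (Am j))"

definition Amat :: "('d::finite \<Rightarrow> complex^'n^'n) \<Rightarrow> complex^'d \<Rightarrow> real^'d \<Rightarrow> complex^'n^'n" where
  "Amat Am a b = (\<Sum>j\<in>UNIV. cscale (complex_of_real (b$j) - a$j - cnj (a$j)) (Am j))"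

definition Xsol :: "('d::finite \<Rightarrow> complex^'n^'n) \<Rightarrow> complex^'d \<Rightarrow> real^'d \<Rightarrow> complex^'n^'n" where
  "Xsol Am a b = (THE X. onorm (\<lambda>v. X *v v) < 1 \<and>
      Pmat Am a ** X ** X + Amat Am a b ** X + ctrans (Pmat Am a) = 0)"

definition D_nondeg :: "('d::finite \<Rightarrow> complex^'n^'n) \<Rightarrow> complex^'d \<Rightarrow> real^'d \<Rightarrow> bool" where
  "D_nondeg Am a b \<longleftrightarrow>
     (let X = Xsol Am a b; A = Amat Am a b in
      \<exists>V::complex^'n.
        det (\<chi> j s. Re (\<Sum>r. hprod ((matpow X r) *v V)
               ((Am j ** matrix_inv A ** Am s ** (matpow X r)) *v V))) \<noteq> 0)"

text \<open>Note: t(conj V) t(conj X)^r M X^r V = hprod (X^r V) (M X^r V).\<close>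

definition stationary_minimal :: "('d::finite \<Rightarrow> complex^'n^'n) \<Rightarrow> complex^'d \<Rightarrow> real^'d \<Rightarrow> complex^'n \<Rightarrow> bool" where
  "stationary_minimal Am a b V \<longleftrightarrow>
     (let X = Xsol Am a b in
      \<forall>lam::real^'d. (\<forall>k::nat. (\<Sum>j\<in>UNIV. cscale (complex_of_real (lam$j)) (Am j)) *v ((matpow X k) *v V) = 0)
        \<longrightarrow> lam = 0)"

end

theory Submission
  imports Defs
begin

(* If L = sum_j lam_j A_j annihilates every X^r V, then, the A_j being Hermitian,
   sum_j lam_j t(conj V) t(conj X)^r A_j A^-1 A_s X^r V = t(conj (L X^r V)) A^-1 A_s X^r V = 0
   term by term, so the real vector lam annihilates the rows of the matrix of
   D(a)-nondegeneracy, which is invertible; hence lam = 0.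
   Exchanging the finite sum over j with the series over r requires X to be a contraction.
   For small a the matrices P and A - sum_j b_j A_j are small, and the quadratic equation,
   written as the fixed point problem X = B^-1 ((B - A) X - P X^2 - t(conj P)) with
   B = sum_j b_j A_j, has by Banach's theorem a solution of norm at most 1/2; a second
   contraction estimate shows it is the only solution of operator norm < 1, so it is the X
   of the statement. *)

lemma norm_diff3_le:
  fixes x y z :: "'a::real_normed_vector"
  shows "norm (x - y - z) \<le> norm x + norm y + norm z"
  by (meson add_mono norm_triangle_ineq4 order_refl order_trans)

lemma norm_scalar_mult_le:
  fixes x :: "'a::real_normed_algebra^'n"
  shows "norm (c *s x) \<le> norm c * norm x"
proof -
  have "norm (c *s x) \<le> L2_set (\<lambda>i. norm c * norm (x$i)) UNIV"
    unfolding norm_vec_def by (rule L2_set_mono) (simp_all add: norm_mult_ineq)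
  also have "\<dots> = norm c * norm x"
    by (simp add: norm_vec_def L2_set_right_distrib)
  finally show ?thesis .
qed

lemma norm_matrix_vector_mult_le:
  fixes A :: "'a::real_normed_algebra_1^'n^'m"
  shows "norm (A *v x) \<le> norm A * norm x"
proof -
  have row: "norm ((A *v x)$i) \<le> norm (A$i) * norm x" for i
  proof -
    have "norm ((A *v x)$i) \<le> (\<Sum>j\<in>UNIV. norm (A$i$j) * norm (x$j))"
      unfolding matrix_vector_mult_def
      by (simp add: order_trans[OF norm_sum sum_mono[OF norm_mult_ineq]])
    also have "\<dots> \<le> norm (A$i) * norm x"
      using L2_set_mult_ineq[of "\<lambda>j. norm (A$i$j)" "\<lambda>j. norm (x$j)" UNIV]
      by (simp add: norm_vec_def)
    finally show ?thesis .
  qed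
  have "norm (A *v x) \<le> L2_set (\<lambda>i. norm (A$i) * norm x) UNIV"
    unfolding norm_vec_def[of "A *v x"] by (rule L2_set_mono) (use row in auto)
  also have "\<dots> = norm A * norm x"
    by (simp add: norm_vec_def L2_set_left_distrib)
  finally show ?thesis .
qed

lemma matrix_matrix_mult_row: "(A ** B)$i = (\<Sum>j\<in>UNIV. A$i$j *s B$j)"
  by (simp add: matrix_matrix_mult_def vec_eq_iff sum_component)

lemma norm_matrix_mult_le:
  fixes A :: "'a::real_normed_algebra_1^'n^'m" and B :: "'a^'k^'n"
  shows "norm (A ** B) \<le> norm A * norm B"
proof -
  have row: "norm ((A ** B)$i) \<le> norm (A$i) * norm B" for i
  proof -
    have "norm ((A ** B)$i) \<le> (\<Sum>j\<in>UNIV. norm (A$i$j) * norm (B$j))"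
      unfolding matrix_matrix_mult_row
      by (rule order_trans[OF norm_sum sum_mono[OF norm_scalar_mult_le]])
    also have "\<dots> \<le> norm (A$i) * norm B"
      using L2_set_mult_ineq[of "\<lambda>j. norm (A$i$j)" "\<lambda>j. norm (B$j)" UNIV]
      by (simp add: norm_vec_def)
    finally show ?thesis .
  qed
  have "norm (A ** B) \<le> L2_set (\<lambda>i. norm (A$i) * norm B) UNIV"
    unfolding norm_vec_def[of "A ** B"] by (rule L2_set_mono) (use row in auto)
  also have "\<dots> = norm A * norm B"
    by (simp add: norm_vec_def L2_set_left_distrib)
  finally show ?thesis .
qed

lemma norm_matrix_mult3_le:
  fixes A B C :: "'a::real_normed_algebra_1^'n^'n"
  shows "norm (A ** B ** C) \<le> norm A * norm B * norm C"
  by (meson norm_ge_zero norm_matrix_mult_le order_trans mult_right_mono)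

lemma norm_matrix_square:
  fixes M :: "'a::real_normed_vector^'n^'m"
  shows "norm M ^ 2 = (\<Sum>i\<in>UNIV. \<Sum>k\<in>UNIV. norm (M$i$k) ^ 2)"
  by (simp add: norm_vec_def L2_set_def sum_nonneg)

lemma norm_ctrans [simp]: "norm (ctrans M) = norm M"
proof -
  have "norm (ctrans M) ^ 2 = norm M ^ 2"
    unfolding norm_matrix_square ctrans_def by (subst sum.swap) simp
  then show ?thesis by (simp add: power2_eq_iff_nonneg)
qed

lemma norm_cscale_le: "norm (cscale c M) \<le> cmod c * norm M"
proof -
  have "cscale c M = (\<chi> i. c *s M$i)"
    by (simp add: cscale_def vec_eq_iff)
  then have "norm (cscale c M) \<le> L2_set (\<lambda>i. cmod c * norm (M$i)) UNIV"
    unfolding norm_vec_def[of "cscale c M"] by (auto intro!: L2_set_mono norm_scalar_mult_le)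
  also have "\<dots> = cmod c * norm M"
    by (simp add: norm_vec_def L2_set_right_distrib)
  finally show ?thesis .
qed

lemma norm_cscale_sum_le:
  "norm (\<Sum>j\<in>J. cscale (c j) (M j)) \<le> (\<Sum>j\<in>J. cmod (c j) * norm (M j))"
  by (rule order_trans[OF norm_sum sum_mono[OF norm_cscale_le]])

(* norm on matrices is the Frobenius norm; the condition defining Xsol uses the operator norm. *)
abbreviation mat_onorm :: "complex^'n^'m \<Rightarrow> real" where
  "mat_onorm M \<equiv> onorm (\<lambda>v. M *v v)"

lemma norm_matrix_vector_mult_le_mat_onorm: "norm (M *v v) \<le> mat_onorm M * norm v"
  by (rule onorm[OF matrix_vector_mul_bounded_linear])

lemma mat_onorm_nonneg: "0 \<le> mat_onorm M"
  by (rule onorm_pos_le[OF matrix_vector_mul_bounded_linear])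

lemma mat_onorm_le_norm: "mat_onorm M \<le> norm M"
  by (rule onorm_bound) (simp_all add: norm_matrix_vector_mult_le)

lemma norm_matpow_mult_le: "norm (matpow X r *v v) \<le> mat_onorm X ^ r * norm v"
proof (induction r)
  case (Suc r)
  have "norm (matpow X (Suc r) *v v) \<le> mat_onorm X * norm (matpow X r *v v)"
    by (simp add: matrix_vector_mul_assoc[symmetric] norm_matrix_vector_mult_le_mat_onorm)
  also have "\<dots> \<le> mat_onorm X * (mat_onorm X ^ r * norm v)"
    by (rule mult_left_mono[OF Suc mat_onorm_nonneg])
  finally show ?case by simp
qed simp

lemma matrix_inv_inverse:
  assumes "invertible A"
  shows "A ** matrix_inv A = mat 1" "matrix_inv A ** A = mat 1"
  using someI_ex[OF assms[unfolded invertible_def]] unfolding matrix_inv_def by auto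

lemma quadratic_matrix_equation_small_solution:
  fixes A B P Q :: "complex^'n^'n"
  assumes inv: "invertible B"
    and small: "norm (matrix_inv B) * (norm (A - B) + norm P + norm Q) \<le> 1/2"
  shows "\<exists>X. norm X \<le> 1/2 \<and> P ** X ** X + A ** X + Q = 0"
proof -
  define E where "E = B - A"
  define T where "T X = matrix_inv B ** (E ** X - P ** X ** X - Q)" for X
  have nE: "norm E = norm (A - B)"
    unfolding E_def by (rule norm_minus_commute)
  have T_le: "norm (T X) \<le> norm (matrix_inv B) * norm (E ** X - P ** X ** X - Q)" for X
    unfolding T_def by (rule norm_matrix_mult_le)
  have contraction: "norm (matrix_inv B) * (norm E + norm P) \<le> 1/2"
  proof (rule order_trans[OF _ small])
    show "norm (matrix_inv B) * (norm E + norm P) \<le>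
        norm (matrix_inv B) * (norm (A - B) + norm P + norm Q)"
      using nE by (intro mult_left_mono) auto
  qed
  have "\<exists>!X\<in>cball 0 (1/2). T X = X"
  proof (rule Banach_fix[where c="1/2"])
    show "T ` cball 0 (1/2) \<subseteq> cball 0 (1/2)"
    proof (rule image_subsetI)
      fix X :: "complex^'n^'n"
      assume "X \<in> cball 0 (1/2)"
      then have X: "norm X \<le> 1/2" by simp
      have "norm (E ** X - P ** X ** X - Q) \<le>
          norm E * norm X + norm P * norm X * norm X + norm Q"
        by (rule order_trans[OF norm_diff3_le])
          (intro add_mono norm_matrix_mult_le norm_matrix_mult3_le order_refl)
      also have "\<dots> \<le> norm E + norm P + norm Q"
        using X by (intro add_mono) (auto simp: mult.assoc intro!: mult_left_le mult_le_one)
      finally have "norm (T X) \<le> norm (matrix_inv B) * (norm E + norm P + norm Q)"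
        by (rule order_trans[OF T_le mult_left_mono]) simp
      then have "norm (T X) \<le> 1/2"
        using small nE by simp
      then show "T X \<in> cball 0 (1/2)" by simp
    qed
  next
    fix X Y :: "complex^'n^'n"
    assume "X \<in> cball 0 (1/2)" "Y \<in> cball 0 (1/2)"
    then have X: "norm X \<le> 1/2" and Y: "norm Y \<le> 1/2" by auto
    define D where "D = X - Y"
    have "T X - T Y = matrix_inv B ** (E ** D - P ** X ** D - P ** D ** Y)"
      unfolding T_def D_def
      by (simp add: matrix_eq matrix_vector_mul_assoc[symmetric] algebra_simps)
    then have "norm (T X - T Y) \<le>
        norm (matrix_inv B) * norm (E ** D - P ** X ** D - P ** D ** Y)"
      by (simp add: norm_matrix_mult_le)
    also have "\<dots> \<le> norm (matrix_inv B) * ((norm E + norm P) * norm D)"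
    proof (rule mult_left_mono)
      have "norm (E ** D - P ** X ** D - P ** D ** Y) \<le>
          norm E * norm D + norm P * norm X * norm D + norm P * norm D * norm Y"
        by (rule order_trans[OF norm_diff3_le])
          (intro add_mono norm_matrix_mult_le norm_matrix_mult3_le order_refl)
      also have "\<dots> \<le> norm E * norm D + norm P * (1/2) * norm D + norm P * norm D * (1/2)"
        using X Y by (intro add_mono mult_left_mono mult_right_mono) auto
      finally show "norm (E ** D - P ** X ** D - P ** D ** Y) \<le> (norm E + norm P) * norm D"
        by (simp add: algebra_simps)
    qed simp
    also have "\<dots> \<le> 1/2 * norm D"
      using mult_right_mono[OF contraction norm_ge_zero] by (simp add: mult.assoc)
    finally show "dist (T X) (T Y) \<le> 1/2 * dist X Y"
      unfolding dist_norm D_def .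
  qed (auto simp: complete_eq_closed)
  then obtain X where X: "norm X \<le> 1/2" and TX: "T X = X" by auto
  have "B ** T X = E ** X - P ** X ** X - Q"
    unfolding T_def by (simp add: matrix_mul_assoc matrix_inv_inverse[OF inv])
  then have "P ** X ** X + A ** X + Q = 0"
    unfolding TX E_def by (simp add: matrix_eq matrix_vector_mul_assoc[symmetric] algebra_simps)
  with X show ?thesis by blast
qed

lemma quadratic_matrix_equation_unique:
  fixes A B P Q X Y :: "complex^'n^'n"
  assumes inv: "invertible B"
    and small: "norm (matrix_inv B) * (norm (A - B) + 2 * norm P) < 1"
    and X: "mat_onorm X \<le> 1" "P ** X ** X + A ** X + Q = 0"
    and Y: "mat_onorm Y \<le> 1" "P ** Y ** Y + A ** Y + Q = 0"
  shows "X = Y"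
proof -
  define D where "D = X - Y"
  define E where "E = B - A"
  define \<delta> where "\<delta> = mat_onorm D"
  \<comment> \<open>subtract the two equations and use X X - Y Y = X D + D Y\<close>
  have "B ** D = E ** D - P ** X ** D - P ** D ** Y"
    using arg_cong2[OF X(2) Y(2), of "(-)"] unfolding D_def E_def
    by (simp add: matrix_eq matrix_vector_mul_assoc[symmetric] algebra_simps)
  then have D_mat: "D = matrix_inv B ** (E ** D - P ** X ** D - P ** D ** Y)"
    by (metis matrix_inv_inverse(2)[OF inv] matrix_mul_assoc matrix_mul_lid)
  have D_eq: "D *v v =
      matrix_inv B *v (E *v (D *v v) - P *v (X *v (D *v v)) - P *v (D *v (Y *v v)))" for v
    using arg_cong[where f = "\<lambda>M. M *v v", OF D_mat]
    unfolding matrix_vector_mul_assoc[symmetric] matrix_vector_mult_diff_rdistrib .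
  have "norm (D *v v) \<le> norm (matrix_inv B) * (norm (A - B) + 2 * norm P) * (\<delta> * norm v)" for v
  proof -
    have Dv: "norm (D *v w) \<le> \<delta> * norm w" for w
      unfolding \<delta>_def by (rule norm_matrix_vector_mult_le_mat_onorm)
    have XY: "norm (X *v w) \<le> norm w" "norm (Y *v w) \<le> norm w" for w
      by (rule order_trans[OF norm_matrix_vector_mult_le_mat_onorm],
          simp add: mult_left_le_one_le X(1) Y(1) mat_onorm_nonneg)+
    have Dv_in_Y: "norm (D *v (Y *v v)) \<le> \<delta> * norm v"
      using Dv[of "Y *v v"] XY(2)[of v] mat_onorm_nonneg[of D] unfolding \<delta>_def
      by (meson mult_left_mono order_trans)
    have "norm (E *v (D *v v) - P *v (X *v (D *v v)) - P *v (D *v (Y *v v))) \<le>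
        norm E * norm (D *v v) + norm P * norm (X *v (D *v v)) + norm P * norm (D *v (Y *v v))"
      by (rule order_trans[OF norm_diff3_le]) (intro add_mono norm_matrix_vector_mult_le)
    also have "\<dots> \<le> norm E * (\<delta> * norm v) + norm P * (\<delta> * norm v) + norm P * (\<delta> * norm v)"
      using Dv XY Dv_in_Y by (intro add_mono mult_left_mono order_trans[OF XY(1)]) auto
    also have "\<dots> = (norm (A - B) + 2 * norm P) * (\<delta> * norm v)"
      unfolding E_def by (simp add: norm_minus_commute algebra_simps)
    finally show ?thesis
      by (subst D_eq) (rule order_trans[OF norm_matrix_vector_mult_le],
          simp add: mult.assoc mult_left_mono)
  qed
  then have "\<delta> \<le> norm (matrix_inv B) * (norm (A - B) + 2 * norm P) * \<delta>"
    unfolding \<delta>_def by (intro onorm_bound) (simp_all add: mat_onorm_nonneg mult.assoc)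
  then have "\<not> 0 < \<delta>"
    using small by (auto simp: mult_le_cancel_right1)
  then have "\<delta> = 0"
    using mat_onorm_nonneg[of D] unfolding \<delta>_def by simp
  then have "D = 0"
    using norm_matrix_vector_mult_le_mat_onorm[of D] unfolding \<delta>_def by (simp add: matrix_eq)
  then show "X = Y"
    unfolding D_def by simp
qed

lemma quadratic_matrix_equation_unique_solution:
  fixes A B P Q :: "complex^'n^'n"
  assumes inv: "invertible B"
    and small: "norm (matrix_inv B) * (norm (A - B) + 2 * norm P + norm Q) \<le> 1/2"
  shows "\<exists>!X. mat_onorm X < 1 \<and> P ** X ** X + A ** X + Q = 0"
proof -
  have mono: "norm (matrix_inv B) * (norm (A - B) + t) \<le> 1/2" if "t \<le> 2 * norm P + norm Q" for t
  proof (rule order_trans[OF _ small])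
    show "norm (matrix_inv B) * (norm (A - B) + t) \<le>
        norm (matrix_inv B) * (norm (A - B) + 2 * norm P + norm Q)"
      using that by (intro mult_left_mono) auto
  qed
  have "norm (matrix_inv B) * (norm (A - B) + norm P + norm Q) \<le> 1/2"
    using mono[of "norm P + norm Q"] by (simp add: add.assoc)
  then obtain X where X: "norm X \<le> 1/2" "P ** X ** X + A ** X + Q = 0"
    using quadratic_matrix_equation_small_solution[OF inv] by blast
  have "mat_onorm X < 1"
    using mat_onorm_le_norm[of X] X(1) by simp
  moreover have "norm (matrix_inv B) * (norm (A - B) + 2 * norm P) < 1"
    using mono[of "2 * norm P"] by simp
  ultimately show ?thesis
    using X(2) quadratic_matrix_equation_unique[OF inv] by (metis less_imp_le)
qed

lemma norm_hprod_le: "cmod (hprod x y) \<le> norm x * norm y"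
proof -
  have "cmod (hprod x y) \<le> (\<Sum>i\<in>UNIV. cmod (x$i) * cmod (y$i))"
    unfolding hprod_def by (rule order_trans[OF norm_sum]) (simp add: norm_mult)
  also have "\<dots> \<le> norm x * norm y"
    using L2_set_mult_ineq[of "\<lambda>i. cmod (x$i)" "\<lambda>i. cmod (y$i)" UNIV]
    by (simp add: norm_vec_def)
  finally show ?thesis .
qed

lemma hprod_sum_left: "hprod (\<Sum>j\<in>J. x j) u = (\<Sum>j\<in>J. hprod (x j) u)"
  unfolding hprod_def sum_component cnj_sum sum_distrib_right by (rule sum.swap)

lemma hprod_scalar_mult_left: "hprod (c *s x) u = cnj c * hprod x u"
  by (simp add: hprod_def sum_distrib_left mult_ac)

lemma hprod_hermitian:
  assumes "hermitian H"
  shows "hprod w (H *v u) = hprod (H *v w) u"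
proof -
  have H: "cnj (H$k$i) = H$i$k" for i k
    using assms unfolding hermitian_def ctrans_def by (metis vec_lambda_beta)
  have "hprod w (H *v u) = (\<Sum>i\<in>UNIV. \<Sum>k\<in>UNIV. cnj (w$i) * H$i$k * u$k)"
    unfolding hprod_def matrix_vector_mult_def by (simp add: sum_distrib_left mult.assoc)
  also have "\<dots> = (\<Sum>k\<in>UNIV. \<Sum>i\<in>UNIV. cnj (w$i) * H$i$k * u$k)"
    by (rule sum.swap)
  also have "\<dots> = hprod (H *v w) u"
    unfolding hprod_def matrix_vector_mult_def vec_lambda_beta cnj_sum sum_distrib_right
    by (simp add: H mult_ac)
  finally show ?thesis .
qed

lemma matrix_vector_mult_cscale_sum:
  "(\<Sum>j\<in>J. cscale (c j) (M j)) *v w = (\<Sum>j\<in>J. c j *s (M j *v w))"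
  by (simp add: vec_eq_iff matrix_vector_mult_def cscale_def sum_component sum_distrib_left
      sum_distrib_right mult.assoc sum.swap[of _ J UNIV])

lemma hprod_real_lincomb_hermitian:
  fixes Am :: "'d::finite \<Rightarrow> complex^'n^'n" and lam :: "real^'d"
  assumes "\<And>j. hermitian (Am j)"
  shows "(\<Sum>j\<in>UNIV. of_real (lam$j) * hprod w (Am j *v u)) =
    hprod ((\<Sum>j\<in>UNIV. cscale (of_real (lam$j)) (Am j)) *v w) u"
  by (simp add: hprod_hermitian[OF assms] matrix_vector_mult_cscale_sum hprod_sum_left
      hprod_scalar_mult_left)

lemma summable_hprod_matpow:
  assumes "mat_onorm X < 1"
  shows "summable (\<lambda>r. hprod (matpow X r *v V) ((M ** matpow X r) *v V))"
proof (rule summable_comparison_test'[where N = 0])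
  let ?q = "mat_onorm X"
  show "summable (\<lambda>r. norm M * norm V ^ 2 * (?q ^ 2) ^ r)"
    using assms mat_onorm_nonneg[of X]
    by (intro summable_mult summable_geometric) (simp add: abs_square_less_1)
  fix r
  have w: "norm (matpow X r *v V) \<le> ?q ^ r * norm V"
    by (rule norm_matpow_mult_le)
  have "norm (hprod (matpow X r *v V) ((M ** matpow X r) *v V)) \<le>
      norm (matpow X r *v V) * (norm M * norm (matpow X r *v V))"
    by (rule order_trans[OF norm_hprod_le])
      (simp add: matrix_vector_mul_assoc[symmetric] mult_left_mono norm_matrix_vector_mult_le)
  also have "\<dots> \<le> ?q ^ r * norm V * (norm M * (?q ^ r * norm V))"
    using w by (intro mult_mono mult_left_mono) (auto simp: mat_onorm_nonneg)
  finally show "norm (hprod (matpow X r *v V) ((M ** matpow X r) *v V)) \<le>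
      norm M * norm V ^ 2 * (?q ^ 2) ^ r"
    by (simp add: power_mult[symmetric] power2_eq_square power_mult_distrib mult_ac)
qed

lemma invertible_vector_matrix_mult_eq_0:
  fixes M :: "'a::field^'n^'n"
  assumes "invertible M" and "x v* M = 0"
  shows "x = 0"
proof -
  obtain M' where "M ** M' = mat 1"
    using assms(1) unfolding invertible_def by blast
  then have "x = (x v* M) v* M'"
    by (simp add: vector_matrix_mul_assoc)
  with assms(2) show ?thesis
    by (simp add: vector_matrix_mult_def vec_eq_iff)
qed

lemma stationary_minimal_if_D_nondeg:
  fixes Am :: "'d::finite \<Rightarrow> complex^'n^'n"
  assumes herm: "\<And>j. hermitian (Am j)"
    and X_small: "mat_onorm (Xsol Am a b) < 1"
    and D: "D_nondeg Am a b"
  shows "\<exists>V. stationary_minimal Am a b V"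
proof -
  define X where "X = Xsol Am a b"
  define Ai where "Ai = matrix_inv (Amat Am a b)"
  obtain V where V: "det (\<chi> j s. Re (\<Sum>r. hprod (matpow X r *v V)
      ((Am j ** Ai ** Am s ** matpow X r) *v V))) \<noteq> 0"
    using D unfolding D_nondeg_def Let_def X_def Ai_def by blast
  define f where
    "f j s r = hprod (matpow X r *v V) ((Am j ** Ai ** Am s ** matpow X r) *v V)" for j s r
  define Mt where "Mt = (\<chi> j s. Re (suminf (f j s)))"
  have "invertible Mt"
    using V unfolding invertible_det_nz Mt_def f_def .
  have "stationary_minimal Am a b V"
    unfolding stationary_minimal_def Let_def X_def[symmetric]
  proof (intro allI impI)
    fix lam :: "real^'d"
    assume "\<forall>k. (\<Sum>j\<in>UNIV. cscale (of_real (lam$j)) (Am j)) *v (matpow X k *v V) = 0"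
    note annihilated = this[rule_format]
    have terms_vanish: "(\<Sum>j\<in>UNIV. lam$j * Re (f j s r)) = 0" for s r
    proof -
      define u where "u = Ai *v (Am s *v (matpow X r *v V))"
      have "(\<Sum>j\<in>UNIV. lam$j * Re (f j s r)) =
          Re (\<Sum>j\<in>UNIV. of_real (lam$j) * hprod (matpow X r *v V) (Am j *v u))"
        by (simp add: f_def u_def matrix_vector_mul_assoc[symmetric] Re_sum)
      also have "\<dots> =
          Re (hprod ((\<Sum>j\<in>UNIV. cscale (of_real (lam$j)) (Am j)) *v (matpow X r *v V)) u)"
        by (simp add: hprod_real_lincomb_hermitian[of Am, OF herm])
      finally show ?thesis
        by (simp add: annihilated hprod_def)
    qed
    have "(\<lambda>r. \<Sum>j\<in>UNIV. lam$j * Re (f j s r)) sums (\<Sum>j\<in>UNIV. lam$j * Mt$j$s)" for s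
      unfolding Mt_def f_def
      by (auto intro!: sums_sum sums_mult sums_Re summable_sums summable_hprod_matpow
          X_small[folded X_def])
    then have "(\<Sum>j\<in>UNIV. lam$j * Mt$j$s) = 0" for s
      unfolding terms_vanish using sums_unique2 sums_zero by blast
    then have "lam v* Mt = 0"
      by (simp add: vec_eq_iff vector_matrix_mult_def mult.commute)
    then show "lam = 0"
      by (rule invertible_vector_matrix_mult_eq_0[OF \<open>invertible Mt\<close>])
  qed
  then show ?thesis ..
qed

lemma norm_Pmat_le: "norm (Pmat Am a) \<le> norm a * (\<Sum>j\<in>UNIV. norm (Am j))"
proof -
  have "norm (Pmat Am a) \<le> (\<Sum>j\<in>UNIV. cmod (a$j) * norm (Am j))"
    unfolding Pmat_def by (rule norm_cscale_sum_le)
  also have "\<dots> \<le> (\<Sum>j\<in>UNIV. norm a * norm (Am j))"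
    by (intro sum_mono mult_right_mono Finite_Cartesian_Product.norm_nth_le) simp
  finally show ?thesis
    by (simp add: sum_distrib_left)
qed

lemma norm_Amat_diff_le:
  "norm (Amat Am a b - (\<Sum>j\<in>UNIV. cscale (of_real (b$j)) (Am j)))
    \<le> 2 * norm a * (\<Sum>j\<in>UNIV. norm (Am j))"
proof -
  have "Amat Am a b - (\<Sum>j\<in>UNIV. cscale (of_real (b$j)) (Am j)) =
      (\<Sum>j\<in>UNIV. cscale (- (a$j + cnj (a$j))) (Am j))"
    unfolding Amat_def
    by (simp add: sum_subtractf[symmetric] cscale_def vec_eq_iff sum_component algebra_simps)
  also have "norm \<dots> \<le> (\<Sum>j\<in>UNIV. cmod (- (a$j + cnj (a$j))) * norm (Am j))"
    by (rule norm_cscale_sum_le)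
  also have "\<dots> \<le> (\<Sum>j\<in>UNIV. 2 * norm a * norm (Am j))"
  proof (intro sum_mono mult_right_mono)
    fix j
    have "cmod (- (a$j + cnj (a$j))) \<le> cmod (a$j) + cmod (cnj (a$j))"
      unfolding norm_minus_cancel by (rule norm_triangle_ineq)
    then show "cmod (- (a$j + cnj (a$j))) \<le> 2 * norm a"
      using Finite_Cartesian_Product.norm_nth_le[of a j] by simp
  qed simp
  finally show ?thesis
    by (simp add: sum_distrib_left)
qed

lemma mat_onorm_Xsol_less_1:
  fixes Am :: "'d::finite \<Rightarrow> complex^'n^'n" and b :: "real^'d"
  assumes binv: "invertible (\<Sum>j\<in>UNIV. cscale (complex_of_real (b$j)) (Am j))"
  shows "\<exists>\<epsilon>>0. \<forall>a. norm a < \<epsilon> \<longrightarrow> mat_onorm (Xsol Am a b) < 1"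
proof -
  define B where "B = (\<Sum>j\<in>UNIV. cscale (complex_of_real (b$j)) (Am j))"
  define \<kappa> where "\<kappa> = norm (matrix_inv B) * (\<Sum>j\<in>UNIV. norm (Am j))"
  have "0 \<le> \<kappa>"
    unfolding \<kappa>_def by (simp add: sum_nonneg)
  show ?thesis
  proof (intro exI[of _ "1 / (10 * (\<kappa> + 1))"] conjI allI impI)
    show "0 < 1 / (10 * (\<kappa> + 1))"
      using \<open>0 \<le> \<kappa>\<close> by simp
    fix a :: "complex^'d"
    assume a: "norm a < 1 / (10 * (\<kappa> + 1))"
    have "norm (matrix_inv B) *
          (norm (Amat Am a b - B) + 2 * norm (Pmat Am a) + norm (ctrans (Pmat Am a)))
        \<le> norm (matrix_inv B) * (5 * norm a * (\<Sum>j\<in>UNIV. norm (Am j)))"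
      using norm_Amat_diff_le[of Am a b] norm_Pmat_le[of Am a] unfolding B_def
      by (intro mult_left_mono) auto
    also have "\<dots> = 5 * (\<kappa> * norm a)"
      unfolding \<kappa>_def by simp
    also have "\<dots> \<le> 1/2"
    proof -
      have "\<kappa> * norm a \<le> (\<kappa> + 1) * norm a"
        by (simp add: mult_right_mono)
      also have "\<dots> \<le> 1/10"
        using a \<open>0 \<le> \<kappa>\<close> by (simp add: field_simps)
      finally show ?thesis by simp
    qed
    finally have "\<exists>!X. mat_onorm X < 1 \<and>
        Pmat Am a ** X ** X + Amat Am a b ** X + ctrans (Pmat Am a) = 0"
      by (rule quadratic_matrix_equation_unique_solution[OF binv[folded B_def]])
    then show "mat_onorm (Xsol Am a b) < 1"
      unfolding Xsol_def by (rule theI'[THEN conjunct1])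
  qed
qed

theorem lemma4p7:
  fixes Am :: "'d::finite \<Rightarrow> complex^'n^'n" and b :: "real^'d"
  assumes herm: "\<And>j. hermitian (Am j)"
    and sLnd: "strongly_Levi_nondeg Am"
    and binv: "invertible (\<Sum>j\<in>UNIV. cscale (complex_of_real (b$j)) (Am j))"
  shows "\<exists>\<epsilon>>0. \<forall>a::complex^'d. norm a < \<epsilon> \<longrightarrow> D_nondeg Am a b \<longrightarrow>
           (\<exists>V::complex^'n. stationary_minimal Am a b V)"
  using mat_onorm_Xsol_less_1[OF binv] stationary_minimal_if_D_nondeg[of Am, OF herm] by blast

end
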